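(* Let $A=[1,1,\dots,1]\in\mathbb R^{1\times N}$, $\vec w\in\mathbb R^N$ with $\sum_{i=1}^N w_i>0$, $b=A\vec w$, and let $\vec x$ be the minimizer of $\frac12\|\vec x-\vec w\|_2^2$ over $\vec x\in\mathbb R^N$ subject to $A\vec x=b$ and $x_i\ge0$ for all $i$. If $w_{i_1}\ge w_{i_2}>0$, then $x_{i_1}=0$ implies $x_{i_2}=0$. *)

theory Defs
  imports "HOL-Analysis.Analysis"
begin

definition Aones :: "real ^ 'n \<Rightarrow> real" where
  "Aones x = (\<Sum>i\<in>UNIV. x $ i)"

definition feasible :: "real \<Rightarrow> (real ^ 'n) set" where
  "feasible b = {x. Aones x = b \<and> (\<forall>i. 0 \<le> x $ i)}"

definition is_minimizer :: "real ^ 'n \<Rightarrow> real ^ 'n \<Rightarrow> bool" where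
  "is_minimizer w x \<longleftrightarrow> x \<in> feasible (Aones w) \<and>
     (\<forall>y \<in> feasible (Aones w). (1/2) * (norm (x - w))\<^sup>2 \<le> (1/2) * (norm (y - w))\<^sup>2)"

end

theory Submission
  imports Defs
begin

text \<open>
  Moving mass \<open>t\<close> from a coordinate \<open>j\<close> with \<open>x j > 0\<close> to a coordinate \<open>i\<close> keeps the point
  feasible for \<open>t \<le> x j\<close> and changes \<open>\<parallel>x - w\<parallel>\<^sup>2\<close> by \<open>2t((x i - w i) - (x j - w j)) + 2t\<^sup>2\<close>.
  Optimality for small \<open>t > 0\<close> gives the KKT condition \<open>x j - w j \<le> x i - w i\<close>. For \<open>j = i2\<close>,
  \<open>i = i1\<close> with \<open>x i1 = 0\<close> and \<open>w i1 \<ge> w i2\<close> this yields \<open>x i2 \<le> 0\<close>.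
\<close>

definition move_mass :: "'n \<Rightarrow> 'n \<Rightarrow> real \<Rightarrow> real ^ 'n \<Rightarrow> real ^ 'n" where
  "move_mass j i t x = x + t *\<^sub>R (axis i 1 - axis j 1)"

lemma move_mass_nth: "move_mass j i t x $ k = x $ k + (if k = i then t else 0) - (if k = j then t else 0)"
  by (simp add: move_mass_def axis_def)

lemma Aones_move_mass: "Aones (move_mass j i t x) = Aones x"
  by (simp add: Aones_def move_mass_nth sum.distrib sum_subtractf)

lemma move_mass_feasible:
  assumes "x \<in> feasible b" and "0 \<le> t" and "t \<le> x $ j"
  shows "move_mass j i t x \<in> feasible b"
  using assms by (auto simp: feasible_def Aones_move_mass move_mass_nth
      intro: add_nonneg_nonneg order_trans[of 0 "x $ _"])

lemma power2_norm_add_scaleR: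
  "(norm (v + t *\<^sub>R u))\<^sup>2 = (norm v)\<^sup>2 + 2 * t * (v \<bullet> u) + t\<^sup>2 * (u \<bullet> u)"
  unfolding power2_norm_eq_inner by (simp add: inner_add inner_commute power2_eq_square algebra_simps)

lemma norm_move_mass_diff_sq:
  fixes x w :: "real ^ 'n"
  assumes "i \<noteq> j"
  shows "(norm (move_mass j i t x - w))\<^sup>2 = (norm (x - w))\<^sup>2 + 2 * t * ((x - w) $ i - (x - w) $ j) + 2 * t\<^sup>2"
proof -
  let ?u = "axis i 1 - axis j 1 :: real ^ 'n"
  have "move_mass j i t x - w = (x - w) + t *\<^sub>R ?u"
    by (simp add: move_mass_def)
  moreover have "(x - w) \<bullet> ?u = (x - w) $ i - (x - w) $ j"
    by (simp add: inner_diff_right inner_axis)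
  moreover have "?u \<bullet> ?u = 2"
    using assms by (simp add: inner_diff inner_axis_axis)
  ultimately show ?thesis
    by (simp only: power2_norm_add_scaleR)
qed

lemma is_minimizer_positive_le:
  assumes "is_minimizer w x" and "0 < x $ j"
  shows "x $ j - w $ j \<le> x $ i - w $ i"
proof (rule ccontr)
  assume violated: "\<not> ?thesis"
  then have "i \<noteq> j" by auto
  define d where "d = (x - w) $ i - (x - w) $ j"
  have "d < 0"
    using violated by (simp add: d_def)
  define t where "t = min (x $ j) (- d / 2)"
  have "0 < t" and "t \<le> x $ j" and "d + t < 0"
    using \<open>d < 0\<close> \<open>0 < x $ j\<close> by (auto simp: t_def)
  have "x \<in> feasible (Aones w)"
    using assms(1) by (simp add: is_minimizer_def)
  then have "move_mass j i t x \<in> feasible (Aones w)"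
    using \<open>0 < t\<close> \<open>t \<le> x $ j\<close> by (simp add: move_mass_feasible)
  then have "(norm (x - w))\<^sup>2 \<le> (norm (move_mass j i t x - w))\<^sup>2"
    using assms(1) by (simp add: is_minimizer_def)
  also have "\<dots> = (norm (x - w))\<^sup>2 + 2 * t * (d + t)"
    unfolding norm_move_mass_diff_sq[OF \<open>i \<noteq> j\<close>] d_def by (simp add: power2_eq_square algebra_simps)
  finally have "0 \<le> t * (d + t)" by simp
  moreover have "t * (d + t) < 0"
    using \<open>0 < t\<close> \<open>d + t < 0\<close> by (simp add: mult_pos_neg)
  ultimately show False by simp
qed

theorem lemma4:
  fixes w x :: "real ^ 'n" and i1 i2 :: 'n
  assumes "Aones w > 0"
    and "is_minimizer w x"
    and "w $ i1 \<ge> w $ i2" and "w $ i2 > 0"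
    and "x $ i1 = 0"
  shows "x $ i2 = 0"
proof (rule ccontr)
  assume "x $ i2 \<noteq> 0"
  moreover have "0 \<le> x $ i2"
    using assms(2) by (simp add: is_minimizer_def feasible_def)
  ultimately have "0 < x $ i2" by simp
  then have "x $ i2 - w $ i2 \<le> x $ i1 - w $ i1"
    by (rule is_minimizer_positive_le[OF assms(2)])
  then show False
    using \<open>0 < x $ i2\<close> assms(3,5) by simp
qed

end
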